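(* Let $D$ be the $N\times N$ matrix with all entries equal to $1/N$. For every choice model $\lambda$ on $S_N$ with $\|\lambda\|_0=k\le N$, one has $\|M(\lambda)-D\|_2\ge \sqrt{1-k/N}$. In particular, any choice model with support size $o(N)$ has $\|M(\lambda)-D\|_2\ge 1-o(1)$ as $N\to\infty$.
   Context: $S_N$ is the set of permutations of $\{1,\dots,N\}$; a choice model is a probability distribution $\lambda$ on $S_N$, $\|\lambda\|_0=|\{\sigma:\lambda(\sigma)>0\}|$, and $M_{ij}(\lambda)=\sum_{\sigma}\lambda(\sigma)\mathbf 1_{\{\sigma(i)=j\}}$. $\|A\|_2=(\sum_{i,j}A_{ij}^2)^{1/2}$. *)

theory Defs
  imports "HOL-Analysis.Analysis" "HOL-Combinatorics.Permutations"
begin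

definition SN :: "nat \<Rightarrow> (nat \<Rightarrow> nat) set" where
  "SN N = {\<sigma>. \<sigma> permutes {1..N}}"

definition choice_model :: "nat \<Rightarrow> ((nat \<Rightarrow> nat) \<Rightarrow> real) \<Rightarrow> bool" where
  "choice_model N lam \<longleftrightarrow> (\<forall>\<sigma>. 0 \<le> lam \<sigma>) \<and> (\<forall>\<sigma>. \<sigma> \<notin> SN N \<longrightarrow> lam \<sigma> = 0)
     \<and> (\<Sum>\<sigma>\<in>SN N. lam \<sigma>) = 1"

definition supp_size :: "((nat \<Rightarrow> nat) \<Rightarrow> real) \<Rightarrow> nat" where
  "supp_size lam = card {\<sigma>. lam \<sigma> > 0}"

definition Mmat :: "nat \<Rightarrow> ((nat \<Rightarrow> nat) \<Rightarrow> real) \<Rightarrow> nat \<Rightarrow> nat \<Rightarrow> real" where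
  "Mmat N lam i j = (\<Sum>\<sigma>\<in>SN N. lam \<sigma> * (if \<sigma> i = j then 1 else 0))"

definition distD :: "nat \<Rightarrow> ((nat \<Rightarrow> nat) \<Rightarrow> real) \<Rightarrow> real" where
  "distD N lam = sqrt (\<Sum>i\<in>{1..N}. \<Sum>j\<in>{1..N}. (Mmat N lam i j - 1 / real N)\<^sup>2)"

end

theory Submission
  imports Defs
begin

(* A choice model lam on S_N with support size k induces the doubly stochastic matrix
   M = M(lam), whose entry M i j is the probability that the random permutation sends i
   to j.  The proof of the lower bound ||M - D||_2 >= sqrt (1 - k/N) works row by row:
   - every row of M sums to 1, so its squared distance from the uniform row (1/N,...,1/N)
     equals its sum of squares minus 1/N;
   - the sum of squares of row i is at least sum_sigma lam(sigma)^2, because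
     M i (sigma i) >= lam sigma, and by the QM-AM inequality this is at least 1/k.
   Summing over the N rows gives ||M - D||_2^2 >= N/k - 1 >= 1 - k/N. *)

definition marginal :: "('a \<Rightarrow> 'b) set \<Rightarrow> (('a \<Rightarrow> 'b) \<Rightarrow> real) \<Rightarrow> 'a \<Rightarrow> 'b \<Rightarrow> real" where
  "marginal S w i j = (\<Sum>\<sigma>\<in>S. w \<sigma> * (if \<sigma> i = j then 1 else 0))"

lemma Mmat_eq_marginal: "Mmat N lam = marginal (SN N) lam"
  by (simp add: fun_eq_iff Mmat_def marginal_def)

lemma marginal_row_sum:
  assumes "finite S" "finite A" and into: "\<And>\<sigma>. \<sigma> \<in> S \<Longrightarrow> \<sigma> i \<in> A"
  shows "(\<Sum>j\<in>A. marginal S w i j) = (\<Sum>\<sigma>\<in>S. w \<sigma>)"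
proof -
  have "(\<Sum>j\<in>A. marginal S w i j) = (\<Sum>\<sigma>\<in>S. \<Sum>j\<in>A. w \<sigma> * (if \<sigma> i = j then 1 else 0))"
    unfolding marginal_def by (rule sum.swap)
  also have "\<dots> = (\<Sum>\<sigma>\<in>S. w \<sigma>)"
    using assms by (intro sum.cong) (simp_all flip: sum_distrib_left)
  finally show ?thesis .
qed

text \<open>For nonnegative weights, the squares in row \<open>i\<close> of the marginal add up to at least
  the sum of the squared weights: expanding one factor of \<open>M i j\<close> gives
  \<open>\<Sum>\<sigma>. w \<sigma> * M i (\<sigma> i)\<close>, and \<open>M i (\<sigma> i) \<ge> w \<sigma>\<close>.\<close>

lemma marginal_row_sum_squares_ge:
  assumes S: "finite S" and "finite A" and into: "\<And>\<sigma>. \<sigma> \<in> S \<Longrightarrow> \<sigma> i \<in> A"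
    and nonneg: "\<And>\<sigma>. 0 \<le> w \<sigma>"
  shows "(\<Sum>\<sigma>\<in>S. (w \<sigma>)\<^sup>2) \<le> (\<Sum>j\<in>A. (marginal S w i j)\<^sup>2)"
proof -
  let ?M = "marginal S w i"
  have entry_ge: "w \<sigma> \<le> ?M (\<sigma> i)" if "\<sigma> \<in> S" for \<sigma>
    unfolding marginal_def
    using member_le_sum[OF that _ S, where f = "\<lambda>\<tau>. w \<tau> * (if \<tau> i = \<sigma> i then 1 else 0)"]
    by (simp add: nonneg)
  have "(\<Sum>\<sigma>\<in>S. (w \<sigma>)\<^sup>2) \<le> (\<Sum>\<sigma>\<in>S. w \<sigma> * ?M (\<sigma> i))"
    by (intro sum_mono) (simp add: power2_eq_square entry_ge mult_left_mono nonneg)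
  also have "\<dots> = (\<Sum>\<sigma>\<in>S. \<Sum>j\<in>A. ?M j * (w \<sigma> * (if \<sigma> i = j then 1 else 0)))"
    using assms by (intro sum.cong) (simp_all add: if_distrib cong: if_cong)
  also have "\<dots> = (\<Sum>j\<in>A. (?M j)\<^sup>2)"
    by (subst sum.swap) (simp add: power2_eq_square marginal_def sum_distrib_left)
  finally show ?thesis .
qed

lemma sum_squares_deviation_from_uniform:
  fixes x :: "'a \<Rightarrow> real"
  assumes "finite A" "A \<noteq> {}" and sum1: "(\<Sum>j\<in>A. x j) = 1"
  shows "(\<Sum>j\<in>A. (x j - 1 / card A)\<^sup>2) = (\<Sum>j\<in>A. (x j)\<^sup>2) - 1 / card A"
proof -
  define c where "c = 1 / real (card A)"
  have "(\<Sum>j\<in>A. (x j - c)\<^sup>2) = (\<Sum>j\<in>A. (x j)\<^sup>2) - 2 * c * (\<Sum>j\<in>A. x j) + card A * c\<^sup>2"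
    by (simp add: power2_diff sum.distrib sum_subtractf sum_distrib_left sum_distrib_right
        algebra_simps)
  then show ?thesis
    using assms by (simp add: c_def power2_eq_square)
qed

lemma finite_SN: "finite (SN N)"
  unfolding SN_def using finite_permutations by blast

lemma choice_model_support:
  assumes "choice_model N lam"
  shows "{\<sigma>. lam \<sigma> > 0} \<subseteq> SN N" and "(\<Sum>\<sigma>\<in>{\<sigma>. lam \<sigma> > 0}. lam \<sigma>) = 1"
    and "supp_size lam > 0"
proof -
  have nonneg: "\<And>\<sigma>. 0 \<le> lam \<sigma>" and outside: "\<And>\<sigma>. \<sigma> \<notin> SN N \<Longrightarrow> lam \<sigma> = 0"
    and total: "(\<Sum>\<sigma>\<in>SN N. lam \<sigma>) = 1"
    using assms unfolding choice_model_def by auto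
  show supp: "{\<sigma>. lam \<sigma> > 0} \<subseteq> SN N"
    using outside by force
  have "\<forall>\<sigma>\<in>SN N - {\<sigma>. lam \<sigma> > 0}. lam \<sigma> = 0"
    using nonneg by (simp add: not_less antisym)
  then have "(\<Sum>\<sigma>\<in>{\<sigma>. lam \<sigma> > 0}. lam \<sigma>) = (\<Sum>\<sigma>\<in>SN N. lam \<sigma>)"
    by (rule sum.mono_neutral_left[OF finite_SN supp])
  then show mass: "(\<Sum>\<sigma>\<in>{\<sigma>. lam \<sigma> > 0}. lam \<sigma>) = 1"
    using total by simp
  have "finite {\<sigma>. lam \<sigma> > 0}"
    using finite_subset[OF supp finite_SN] .
  then show "supp_size lam > 0"
    unfolding supp_size_def using mass by (metis card_gt_0_iff sum.empty zero_neq_one)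
qed

text \<open>A probability distribution with support size \<open>k\<close> has collision probability at least
  \<open>1/k\<close> (quadratic mean versus arithmetic mean on the support).\<close>

lemma choice_model_sum_squares_ge:
  assumes "choice_model N lam"
  shows "1 / supp_size lam \<le> (\<Sum>\<sigma>\<in>SN N. (lam \<sigma>)\<^sup>2)"
proof -
  let ?P = "{\<sigma>. lam \<sigma> > 0}"
  note supp = choice_model_support[OF assms]
  have "1 \<le> (\<Sum>\<sigma>\<in>?P. (lam \<sigma>)\<^sup>2) * supp_size lam"
    using sum_squared_le_sum_of_squares[of lam ?P] supp(2) unfolding supp_size_def by simp
  then have "1 / supp_size lam \<le> (\<Sum>\<sigma>\<in>?P. (lam \<sigma>)\<^sup>2)"
    using supp(3) by (simp add: divide_le_eq)
  also have "\<dots> = (\<Sum>\<sigma>\<in>SN N. (lam \<sigma>)\<^sup>2)"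
    using assms unfolding choice_model_def
    by (intro sum.mono_neutral_left[OF finite_SN supp(1)]) (auto simp: not_less intro: antisym)
  finally show ?thesis .
qed

lemma one_minus_ratio_le_inverse_ratio_minus_one:
  fixes k n :: real
  assumes "0 < k" "0 < n"
  shows "1 - k / n \<le> n / k - 1"
proof -
  have "0 \<le> (n - k)\<^sup>2" by simp
  then show ?thesis
    using assms by (simp add: field_simps power2_eq_square power2_diff)
qed

text \<open>The first claim: \<open>||M(\<lambda>) - D||_2 \<ge> sqrt (1 - k/N)\<close>.  Each of the \<open>N\<close> rows
  contributes at least \<open>1/k - 1/N\<close> to the squared distance.\<close>

theorem distD_lower_bound:
  assumes cm: "choice_model N lam" and "supp_size lam \<le> N"
  shows "sqrt (1 - real (supp_size lam) / real N) \<le> distD N lam"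
proof -
  let ?k = "real (supp_size lam)" and ?M = "marginal (SN N) lam"
  have k_pos: "?k > 0" using choice_model_support(3)[OF cm] by simp
  then have N_pos: "real N > 0" using assms(2) by linarith
  have nonneg: "\<And>\<sigma>. 0 \<le> lam \<sigma>" and total: "(\<Sum>\<sigma>\<in>SN N. lam \<sigma>) = 1"
    using cm unfolding choice_model_def by auto
  have row_bound: "1 / ?k - 1 / N \<le> (\<Sum>j\<in>{1..N}. (?M i j - 1 / N)\<^sup>2)" if i: "i \<in> {1..N}" for i
  proof -
    have into_i: "\<And>\<sigma>. \<sigma> \<in> SN N \<Longrightarrow> \<sigma> i \<in> {1..N}"
      using i permutes_in_image unfolding SN_def by fastforce
    have "(\<Sum>j\<in>{1..N}. ?M i j) = 1"
      using marginal_row_sum[where S = "SN N" and A = "{1..N}" and i = i and w = lam]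
        finite_SN into_i total by simp
    then have "(\<Sum>j\<in>{1..N}. (?M i j - 1 / N)\<^sup>2) = (\<Sum>j\<in>{1..N}. (?M i j)\<^sup>2) - 1 / N"
      using sum_squares_deviation_from_uniform[of "{1..N}" "?M i"] i by auto
    moreover have "1 / ?k \<le> (\<Sum>j\<in>{1..N}. (?M i j)\<^sup>2)"
      using choice_model_sum_squares_ge[OF cm]
        marginal_row_sum_squares_ge[where S = "SN N" and A = "{1..N}" and i = i and w = lam]
        finite_SN into_i nonneg by simp
    ultimately show ?thesis by simp
  qed
  have "1 - ?k / N \<le> N / ?k - 1"
    using one_minus_ratio_le_inverse_ratio_minus_one[OF k_pos N_pos] .
  also have "\<dots> = (\<Sum>i\<in>{1..N}. 1 / ?k - 1 / N)"
    using N_pos by (simp add: right_diff_distrib)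
  also have "\<dots> \<le> (\<Sum>i\<in>{1..N}. \<Sum>j\<in>{1..N}. (?M i j - 1 / N)\<^sup>2)"
    by (intro sum_mono row_bound)
  finally show ?thesis
    unfolding distD_def Mmat_eq_marginal by simp
qed

text \<open>The second claim: if the support sizes are \<open>o(N)\<close>, the distance is eventually
  at least \<open>1 - \<epsilon>\<close>, since the lower bound \<open>sqrt (1 - k_N/N)\<close> tends to 1.\<close>

theorem distD_eventually_ge:
  assumes cm: "\<And>N. choice_model N (lam N)"
    and sparse: "((\<lambda>N. real (supp_size (lam N)) / real N) \<longlongrightarrow> 0) sequentially"
    and "\<epsilon> > 0"
  shows "eventually (\<lambda>N. 1 - \<epsilon> \<le> distD N (lam N)) sequentially"
proof -
  let ?r = "\<lambda>N. real (supp_size (lam N)) / real N"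
  have "((\<lambda>N. sqrt (1 - ?r N)) \<longlongrightarrow> sqrt (1 - 0)) sequentially"
    by (intro tendsto_intros sparse)
  moreover have "1 - \<epsilon> < sqrt (1 - 0)"
    using \<open>\<epsilon> > 0\<close> by simp
  ultimately have bound_large: "eventually (\<lambda>N. 1 - \<epsilon> < sqrt (1 - ?r N)) sequentially"
    by (rule order_tendstoD(1))
  have ratio_small: "eventually (\<lambda>N. ?r N < 1) sequentially"
    using order_tendstoD(2)[OF sparse zero_less_one] .
  show ?thesis
    using bound_large ratio_small eventually_gt_at_top[of 0]
  proof eventually_elim
    case (elim N)
    then have "supp_size (lam N) \<le> N"
      by (simp add: divide_less_eq)
    then show ?case
      using distD_lower_bound[OF cm] elim(1) by (meson less_imp_le order_trans)
  qed
qed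

theorem mainTheorem3:
  shows "(\<forall>N lam. choice_model N lam \<and> supp_size lam \<le> N \<longrightarrow>
            distD N lam \<ge> sqrt (1 - real (supp_size lam) / real N))
       \<and> (\<forall>lam :: nat \<Rightarrow> ((nat \<Rightarrow> nat) \<Rightarrow> real).
            (\<forall>N. choice_model N (lam N)) \<and>
            ((\<lambda>N. real (supp_size (lam N)) / real N) \<longlongrightarrow> 0) sequentially \<longrightarrow>
            (\<forall>\<epsilon>>0. eventually (\<lambda>N. distD N (lam N) \<ge> 1 - \<epsilon>) sequentially))"
  using distD_lower_bound distD_eventually_ge by blast

end
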